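(* In the Chung–Lu random graph model, assume $S_2>S$, let $s\neq t$ be vertices and $r\ge1$ an integer with $2r<S_2/S$. Then $$E[NBP_r(s,t)]\le \frac{p_{st}\,(S_2/S)^{r-1}}{1-\frac{S}{S_2}}\exp\!\left(\frac{\left(2r\frac{S}{S_2}\right)^2p_{\max}}{1-\frac{2rS}{S_2}}\right).$$
   Context: Chung–Lu model: given $d_1,\dots,d_n>0$ with $S=\sum_i d_i$ and $\max_i d_i^2\le S$, each edge $\{i,j\}$ (including loops) of the random undirected graph on $\{1,\dots,n\}$ is present independently with probability $p_{ij}=d_id_j/S$. $S_2=\sum_i d_i^2$, $d_{\max}=\max_i d_i$, $p_{\max}=d_{\max}^2/S$. $NBP_r(s,t)$ is the number of nonbacktracking walks of length $r$ from $s$ to $t$: sequences $(x_1,\dots,x_{r+1})$ with $x_1=s$, $x_{r+1}=t$, every $\{x_i,x_{i+1}\}$ an edge of the graph, and $x_i\neq x_{i+2}$ for $1\le i\le r-1$. *)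

theory Defs
  imports "HOL-Probability.Probability"
begin

text \<open>Chung--Lu model on vertex set {1..n} with weights d. Undirected edges (including
loops) are represented as sets {i,j} with i,j in {1..n}; a graph is the indicator
function of its edge set.\<close>

definition CL_S :: "nat \<Rightarrow> (nat \<Rightarrow> real) \<Rightarrow> real" where
  "CL_S n d = (\<Sum>i\<in>{1..n}. d i)"

definition CL_S2 :: "nat \<Rightarrow> (nat \<Rightarrow> real) \<Rightarrow> real" where
  "CL_S2 n d = (\<Sum>i\<in>{1..n}. (d i)^2)"

definition CL_dmax :: "nat \<Rightarrow> (nat \<Rightarrow> real) \<Rightarrow> real" where
  "CL_dmax n d = Max (d ` {1..n})"

definition CL_pmax :: "nat \<Rightarrow> (nat \<Rightarrow> real) \<Rightarrow> real" where
  "CL_pmax n d = (CL_dmax n d)^2 / CL_S n d"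

definition CL_p :: "nat \<Rightarrow> (nat \<Rightarrow> real) \<Rightarrow> nat \<Rightarrow> nat \<Rightarrow> real" where
  "CL_p n d i j = d i * d j / CL_S n d"

definition CL_edges :: "nat \<Rightarrow> nat set set" where
  "CL_edges n = {{i, j} | i j. i \<in> {1..n} \<and> j \<in> {1..n}}"

definition CL_edge_prob :: "nat \<Rightarrow> (nat \<Rightarrow> real) \<Rightarrow> nat set \<Rightarrow> real" where
  "CL_edge_prob n d e = CL_p n d (Min e) (Max e)"

definition chung_lu :: "nat \<Rightarrow> (nat \<Rightarrow> real) \<Rightarrow> (nat set \<Rightarrow> bool) pmf" where
  "chung_lu n d = Pi_pmf (CL_edges n) False (\<lambda>e. bernoulli_pmf (CL_edge_prob n d e))"

text \<open>Number of nonbacktracking walks of length r from s to t in graph G on {1..n}: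
sequences (x_1,...,x_{r+1}) (0-indexed here) of vertices.\<close>
definition NBP :: "nat \<Rightarrow> (nat set \<Rightarrow> bool) \<Rightarrow> nat \<Rightarrow> nat \<Rightarrow> nat \<Rightarrow> nat" where
  "NBP n G r s t = card {xs :: nat list. length xs = r + 1 \<and> set xs \<subseteq> {1..n} \<and>
      xs ! 0 = s \<and> xs ! r = t \<and>
      (\<forall>i<r. G {xs ! i, xs ! (i + 1)}) \<and>
      (\<forall>i. i + 2 \<le> r \<longrightarrow> xs ! i \<noteq> xs ! (i + 2))}"

end

theory Submission
  imports Defs
begin

text \<open>
  The expectation of NBP is a sum over nonbacktracking walks from s to t of the product of the
  edge probabilities over the distinct edges of the walk. Summing over the walk step by step, a
  step along an edge not used before from x costs at most d x * dmax / S, while a step along an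
  already used edge is free; since at most r edges are ever used, every vertex has at most r
  used neighbours and the used degrees sum to at most 2r. Induction on the remaining length
  bounds the weight of all continuations by a potential: the tree term p(x,t) * (S2/S)^(m-1)
  inflated by (1 + beta)^m * (1 + m beta), a correction once t lies on a used edge (only then
  can the walk end along used edges), and the contribution of runs of free steps, which is
  geometric in r S / S2. Finally (1 + beta)^r * (1 + r beta) \<le> exp (2 r beta).
\<close>

lemma prod_insert_diff:
  assumes "finite B"
  shows "(\<Prod>e\<in>insert u B - E. f e) = (if u \<in> E then 1 else f u) * (\<Prod>e\<in>B - insert u E. f e)"
proof (cases "u \<in> E")
  case True
  then have "insert u B - E = B - insert u E" by blast
  with True show ?thesis by (simp only: if_True mult_1)
next
  case False
  then have "insert u B - E = insert u (B - insert u E)" by blast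
  with False assms show ?thesis by (simp only: if_False) (simp add: prod.insert)
qed

lemma card_doubleton_neighbours_le:
  assumes "finite E"
  shows "card {z. P z \<and> {x, z} \<in> E} \<le> card E"
proof -
  have "inj_on (\<lambda>z. {x, z}) {z. P z \<and> {x, z} \<in> E}"
    by (auto simp: inj_on_def doubleton_eq_iff)
  then show ?thesis using assms by (intro card_inj_on_le) auto
qed

lemma sum_card_doubleton_neighbours_le:
  assumes "finite A" "finite E" and doubletons: "\<forall>e\<in>E. \<exists>u v. e = {u, v}"
  shows "(\<Sum>y\<in>A. card {z\<in>A. {y, z} \<in> E}) \<le> 2 * card E"
proof -
  have ends: "finite {(y, z). {y, z} = e} \<and> card {(y, z). {y, z} = e} \<le> 2" if "e \<in> E" for e
  proof -
    obtain u v where "e = {u, v}" using doubletons \<open>e \<in> E\<close> by blast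
    then have sub: "{(y, z). {y, z} = e} \<subseteq> {(u, v), (v, u)}"
      by (auto simp: doubleton_eq_iff)
    have "card {(y, z). {y, z} = e} \<le> card {(u, v), (v, u)}"
      by (rule card_mono[OF _ sub]) simp
    also have "\<dots> \<le> 2"
      using card_length[of "[(u, v), (v, u)]"] by (simp only: list.set length_Cons list.size)
    finally show ?thesis using finite_subset[OF sub] by simp
  qed
  have "(\<Sum>y\<in>A. card {z\<in>A. {y, z} \<in> E}) = card (SIGMA y:A. {z\<in>A. {y, z} \<in> E})"
    by (simp add: card_SigmaI assms(1))
  also have "\<dots> \<le> card (\<Union>e\<in>E. {(y, z). {y, z} = e})"
    by (rule card_mono) (use assms(2) ends in auto)
  also have "\<dots> \<le> (\<Sum>e\<in>E. card {(y, z). {y, z} = e})" by (rule card_UN_le[OF assms(2)])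
  also have "\<dots> \<le> (\<Sum>e\<in>E. 2)" by (rule sum_mono) (use ends in blast)
  finally show ?thesis by simp
qed

lemma power_mult_le_exp:
  fixes b :: real
  assumes "b \<ge> 0"
  shows "(1 + b) ^ m * (1 + real m * b) \<le> exp (2 * real m * b)"
proof -
  have "(1 + b) ^ m * (1 + real m * b) \<le> exp b ^ m * exp (real m * b)"
    using assms by (intro mult_mono power_mono) (auto simp: add.commute exp_ge_add_one_self)
  also have "\<dots> = exp (2 * real m * b)"
    by (simp add: exp_of_nat_mult[symmetric] exp_add[symmetric] algebra_simps)
  finally show ?thesis .
qed

lemma sum_power_lessThan_le:
  fixes x :: real
  assumes "0 \<le> x" "x < 1"
  shows "(\<Sum>i<m. x ^ i) \<le> 1 / (1 - x)"
proof -
  have "(1 - x) * (\<Sum>i<m. x ^ i) \<le> 1"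
    using assms by (simp add: one_diff_power_eq[symmetric])
  then show ?thesis
    using assms by (simp add: field_simps)
qed

fun nonbacktracking :: "'a list \<Rightarrow> bool" where
  "nonbacktracking (u # v # w # l) \<longleftrightarrow> u \<noteq> w \<and> nonbacktracking (v # w # l)"
| "nonbacktracking _ \<longleftrightarrow> True"

lemma nonbacktracking_iff_nth:
  "nonbacktracking xs \<longleftrightarrow> (\<forall>i. i + 2 < length xs \<longrightarrow> xs ! i \<noteq> xs ! (i + 2))"
proof (induction xs rule: nonbacktracking.induct)
  case (1 u v w l)
  have shift: "(\<forall>i. P i) \<longleftrightarrow> P 0 \<and> (\<forall>j. P (Suc j))" for P :: "nat \<Rightarrow> bool"
    by (metis not0_implies_Suc)
  show ?case
    unfolding nonbacktracking.simps 1 by (subst (2) shift) (simp add: numeral_2_eq_2)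
qed auto

fun walk_edges :: "'a \<Rightarrow> 'a list \<Rightarrow> 'a set set" where
  "walk_edges x [] = {}"
| "walk_edges x (y # c) = insert {x, y} (walk_edges y c)"

lemma finite_walk_edges [simp]: "finite (walk_edges x c)"
  by (induction c arbitrary: x) auto

lemma ball_walk_edges_iff_nth:
  "(\<forall>e\<in>walk_edges x c. P e) \<longleftrightarrow> (\<forall>i<length c. P {(x # c) ! i, (x # c) ! Suc i})"
  by (induction c arbitrary: x) (auto simp: less_Suc_eq_0_disj)

locale chung_lu_target =
  fixes n :: nat and d :: "nat \<Rightarrow> real" and t :: nat
  assumes d_pos: "\<And>i. i \<in> {1..n} \<Longrightarrow> d i > 0"
    and d_sq_le: "\<And>i. i \<in> {1..n} \<Longrightarrow> (d i)^2 \<le> CL_S n d"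
    and t: "t \<in> {1..n}"
begin

abbreviation "S \<equiv> CL_S n d"
abbreviation "S2 \<equiv> CL_S2 n d"
abbreviation "dmax \<equiv> CL_dmax n d"
abbreviation "p \<equiv> CL_edge_prob n d"

definition "mu = S2 / S"
definition "q = S / S2"

lemma S_pos: "S > 0"
  unfolding CL_S_def using d_pos t by (intro sum_pos) auto

lemma S2_pos: "S2 > 0"
proof -
  have "d i ^ 2 > 0" if "i \<in> {1..n}" for i
    using d_pos[OF that] by simp
  then show ?thesis
    unfolding CL_S2_def using t by (intro sum_pos) auto
qed

lemma mu_pos: "mu > 0" and q_pos: "q > 0" and mu_mult_q: "mu * q = 1"
  using S_pos S2_pos by (auto simp: mu_def q_def)

lemma mu_power_diff:
  assumes "l \<le> m"
  shows "mu ^ (m - l) = mu ^ m * q ^ l"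
proof -
  have "mu ^ m * q ^ l = mu ^ (m - l) * (mu * q) ^ l"
    using assms by (simp add: power_mult_distrib flip: power_add)
  then show ?thesis using mu_mult_q by simp
qed

lemma d_le_dmax: "i \<in> {1..n} \<Longrightarrow> d i \<le> dmax"
  unfolding CL_dmax_def by (intro Max_ge) auto

lemma dmax_pos: "dmax > 0"
  using d_le_dmax[OF t] d_pos t by fastforce

lemma d_t_pos: "d t > 0"
  using d_pos t by auto

lemma edge_prob_doubleton: "p {x, y} = d x * d y / S"
  by (cases "x \<le> y") (auto simp: CL_edge_prob_def CL_p_def min_def max_def mult.commute)

lemma edge_prob_nonneg: "x \<in> {1..n} \<Longrightarrow> y \<in> {1..n} \<Longrightarrow> p {x, y} \<ge> 0"
  using d_pos[of x] d_pos[of y] S_pos by (simp add: edge_prob_doubleton)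

lemma edge_prob_le:
  assumes "x \<in> {1..n}" "y \<in> {1..n}"
  shows "p {x, y} \<le> d x * dmax / S"
  unfolding edge_prob_doubleton using d_pos[OF assms(1)] d_le_dmax[OF assms(2)] S_pos
  by (intro divide_right_mono mult_left_mono) auto

lemma edge_prob_le_one:
  assumes "x \<in> {1..n}" "y \<in> {1..n}"
  shows "p {x, y} \<le> 1"
proof -
  have "(d x)^2 * (d y)^2 \<le> S * S"
    by (rule mult_mono[OF d_sq_le[OF assms(1)] d_sq_le[OF assms(2)]]) (use S_pos in auto)
  then have "(d x * d y)^2 \<le> S^2"
    by (simp add: power_mult_distrib power2_eq_square mult_ac)
  then have "d x * d y \<le> S"
    by (rule power2_le_imp_le) (use S_pos in simp)
  then show ?thesis
    using S_pos by (simp add: edge_prob_doubleton)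
qed

lemma sum_edge_prob_mult_d: "(\<Sum>y\<in>{1..n}. p {x, y} * d y) = d x * mu"
proof -
  have "(\<Sum>y\<in>{1..n}. p {x, y} * d y) = (d x / S) * (\<Sum>y\<in>{1..n}. d y * d y)"
    by (simp add: edge_prob_doubleton sum_distrib_left algebra_simps)
  also have "(\<Sum>y\<in>{1..n}. d y * d y) = S2"
    by (simp add: CL_S2_def power2_eq_square)
  finally show ?thesis by (simp add: mu_def)
qed

lemma finite_CL_edges: "finite (CL_edges n)"
proof (rule finite_subset)
  show "CL_edges n \<subseteq> (\<lambda>(i, j). {i, j}) ` ({1..n} \<times> {1..n})"
  proof
    fix e assume "e \<in> CL_edges n"
    then obtain i j where "e = {i, j}" "i \<in> {1..n}" "j \<in> {1..n}"
      unfolding CL_edges_def by blast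
    then show "e \<in> (\<lambda>(i, j). {i, j}) ` ({1..n} \<times> {1..n})"
      by (auto intro!: image_eqI[of _ _ "(i, j)"])
  qed
qed simp

lemma prob_all_edges_present:
  assumes "F \<subseteq> CL_edges n"
  shows "measure_pmf.prob (chung_lu n d) {G. \<forall>e\<in>F. G e} = (\<Prod>e\<in>F. p e)"
proof -
  have events: "{G. \<forall>e\<in>F. G e} = Pi (CL_edges n) (\<lambda>e. if e \<in> F then {True} else UNIV)"
    using assms by (auto simp: Pi_def)
  have p01: "0 \<le> p e \<and> p e \<le> 1" if "e \<in> CL_edges n" for e
  proof -
    obtain i j where "e = {i, j}" "i \<in> {1..n}" "j \<in> {1..n}"
      using \<open>e \<in> CL_edges n\<close> unfolding CL_edges_def by blast
    then show ?thesis using edge_prob_nonneg edge_prob_le_one by simp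
  qed
  have "measure_pmf.prob (chung_lu n d) {G. \<forall>e\<in>F. G e}
      = (\<Prod>e\<in>CL_edges n. measure_pmf.prob (bernoulli_pmf (p e)) (if e \<in> F then {True} else UNIV))"
    unfolding events chung_lu_def by (rule measure_Pi_pmf_Pi[OF finite_CL_edges])
  also have "\<dots> = (\<Prod>e\<in>CL_edges n. if e \<in> F then p e else 1)"
  proof (rule prod.cong[OF refl])
    fix e assume "e \<in> CL_edges n"
    then show "measure_pmf.prob (bernoulli_pmf (p e)) (if e \<in> F then {True} else UNIV)
        = (if e \<in> F then p e else 1)"
      using p01 by (auto simp: measure_pmf_single)
  qed
  also have "\<dots> = (\<Prod>e\<in>CL_edges n \<inter> F. p e)"
    by (rule prod.inter_restrict[OF finite_CL_edges, symmetric])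
  also have "CL_edges n \<inter> F = F"
    using assms by blast
  finally show ?thesis .
qed

text \<open>\<open>pr\<close> is the vertex visited before \<open>x\<close>, \<open>None\<close> at the start of the walk.\<close>

fun nb_walk :: "nat option \<Rightarrow> nat \<Rightarrow> nat list \<Rightarrow> bool" where
  "nb_walk pr x [] \<longleftrightarrow> x = t"
| "nb_walk pr x (y # c) \<longleftrightarrow> y \<in> {1..n} \<and> pr \<noteq> Some y \<and> nb_walk (Some x) y c"

lemma nb_walk_iff:
  "nb_walk pr x c \<longleftrightarrow>
     set c \<subseteq> {1..n} \<and> last (x # c) = t \<and> nonbacktracking (case pr of None \<Rightarrow> x # c | Some u \<Rightarrow> u # x # c)"
proof (induction c arbitrary: pr x)
  case Nil
  then show ?case by (cases pr) auto
next
  case (Cons y c)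
  show ?case
  proof (cases pr)
    case None
    then show ?thesis using Cons[of "Some x" y] by simp
  next
    case (Some u)
    then show ?thesis using Cons[of "Some x" y] by auto
  qed
qed

lemma finite_nb_walks: "finite {c. length c = k \<and> nb_walk pr x c}"
proof (rule finite_subset)
  show "{c. length c = k \<and> nb_walk pr x c} \<subseteq> {c. set c \<subseteq> {1..n} \<and> length c = k}"
    by (auto simp: nb_walk_iff)
qed (simp add: finite_lists_length_eq)

text \<open>The edges in \<open>E\<close> have been used already and are not charged again.\<close>

fun walk_weight :: "nat set set \<Rightarrow> nat option \<Rightarrow> nat \<Rightarrow> nat \<Rightarrow> real" where
  "walk_weight E pr x 0 = (if x = t then 1 else 0)"
| "walk_weight E pr x (Suc m) = (\<Sum>y\<in>{y\<in>{1..n}. pr \<noteq> Some y}.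
      (if {x, y} \<in> E then 1 else p {x, y}) * walk_weight (insert {x, y} E) (Some x) y m)"

lemma walk_weight_eq_sum:
  "walk_weight E pr x k = (\<Sum>c\<in>{c. length c = k \<and> nb_walk pr x c}. \<Prod>e\<in>walk_edges x c - E. p e)"
proof (induction k arbitrary: E pr x)
  case 0
  have "{c. length c = 0 \<and> nb_walk pr x c} = (if x = t then {[]} else {})" by auto
  then show ?case by simp
next
  case (Suc m)
  let ?Y = "{y\<in>{1..n}. pr \<noteq> Some y}"
  let ?C = "\<lambda>y. {c. length c = m \<and> nb_walk (Some x) y c}"
  have walks: "{c. length c = Suc m \<and> nb_walk pr x c} = (\<lambda>(y, c). y # c) ` (SIGMA y:?Y. ?C y)"
  proof
    show "{c. length c = Suc m \<and> nb_walk pr x c} \<subseteq> (\<lambda>(y, c). y # c) ` (SIGMA y:?Y. ?C y)"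
    proof
      fix c assume "c \<in> {c. length c = Suc m \<and> nb_walk pr x c}"
      then obtain y c' where "c = y # c'" "length c' = m" "nb_walk pr x (y # c')"
        by (auto simp: length_Suc_conv)
      then show "c \<in> (\<lambda>(y, c). y # c) ` (SIGMA y:?Y. ?C y)"
        by (auto intro!: image_eqI[of _ _ "(y, c')"])
    qed
  qed auto
  have inj: "inj_on (\<lambda>(y, c). y # c) (SIGMA y:?Y. ?C y)"
    by (auto simp: inj_on_def)
  have "(\<Sum>c\<in>{c. length c = Suc m \<and> nb_walk pr x c}. \<Prod>e\<in>walk_edges x c - E. p e)
      = (\<Sum>(y, c)\<in>(SIGMA y:?Y. ?C y). \<Prod>e\<in>walk_edges x (y # c) - E. p e)"
    unfolding walks by (subst sum.reindex[OF inj]) (simp add: case_prod_beta)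
  also have "\<dots> = (\<Sum>y\<in>?Y. \<Sum>c\<in>?C y. \<Prod>e\<in>insert {x, y} (walk_edges y c) - E. p e)"
    by (subst sum.Sigma[symmetric]) (auto intro: finite_nb_walks)
  also have "\<dots> = (\<Sum>y\<in>?Y. (if {x, y} \<in> E then 1 else p {x, y}) *
       (\<Sum>c\<in>?C y. \<Prod>e\<in>walk_edges y c - insert {x, y} E. p e))"
    by (simp only: prod_insert_diff[OF finite_walk_edges] sum_distrib_left)
  also have "\<dots> = walk_weight E pr x (Suc m)"
    using Suc.IH by simp
  finally show ?case ..
qed

lemma walk_edges_subset_CL_edges:
  "x \<in> {1..n} \<Longrightarrow> set c \<subseteq> {1..n} \<Longrightarrow> walk_edges x c \<subseteq> CL_edges n"
  by (induction c arbitrary: x) (auto simp: CL_edges_def)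

lemma NBP_walks_eq:
  assumes "s \<in> {1..n}"
  shows "{xs. length xs = r + 1 \<and> set xs \<subseteq> {1..n} \<and> xs ! 0 = s \<and> xs ! r = t \<and>
      (\<forall>i<r. G {xs ! i, xs ! (i + 1)}) \<and> (\<forall>i. i + 2 \<le> r \<longrightarrow> xs ! i \<noteq> xs ! (i + 2))}
    = (\<lambda>c. s # c) ` {c. length c = r \<and> nb_walk None s c \<and> (\<forall>e\<in>walk_edges s c. G e)}"
  (is "?W = (\<lambda>c. s # c) ` ?C")
proof (intro set_eqI iffI)
  have walk_iff: "s # c \<in> ?W \<longleftrightarrow> c \<in> ?C" for c
  proof (cases "length c = r")
    case True
    have "last (s # c) = (s # c) ! r"
      using last_conv_nth[of "s # c"] True by simp
    moreover have "(\<forall>i. i + 2 \<le> r \<longrightarrow> (s # c) ! i \<noteq> (s # c) ! (i + 2)) \<longleftrightarrow>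
        nonbacktracking (s # c)"
      using True by (simp add: nonbacktracking_iff_nth Suc_le_eq)
    moreover have "(\<forall>i<r. G {(s # c) ! i, (s # c) ! (i + 1)}) \<longleftrightarrow> (\<forall>e\<in>walk_edges s c. G e)"
      using True by (simp add: ball_walk_edges_iff_nth)
    ultimately show ?thesis
      using True assms by (auto simp: nb_walk_iff)
  qed simp
  fix xs
  show "xs \<in> (\<lambda>c. s # c) ` ?C" if W: "xs \<in> ?W"
  proof -
    obtain c where "xs = s # c"
      using W by (cases xs) auto
    then show ?thesis
      using W walk_iff by blast
  qed
  show "xs \<in> ?W" if "xs \<in> (\<lambda>c. s # c) ` ?C"
    using that walk_iff by blast
qed

lemma expectation_NBP:
  assumes s: "s \<in> {1..n}"
  shows "measure_pmf.expectation (chung_lu n d) (\<lambda>G. real (NBP n G r s t)) = walk_weight {} None s r"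
proof -
  let ?C = "{c. length c = r \<and> nb_walk None s c}"
  let ?present = "\<lambda>c. {G. \<forall>e\<in>walk_edges s c. G e}"
  have NBP_eq: "real (NBP n G r s t) = (\<Sum>c\<in>?C. indicator (?present c) G)" for G
  proof -
    have "NBP n G r s t = card {c\<in>?C. G \<in> ?present c}"
      unfolding NBP_def NBP_walks_eq[OF s] by (subst card_image) (auto simp: inj_on_def)
    then have "real (NBP n G r s t) = (\<Sum>c\<in>{c\<in>?C. G \<in> ?present c}. 1)"
      by simp
    also have "\<dots> = (\<Sum>c\<in>?C. indicator (?present c) G)"
      unfolding sum.inter_filter[OF finite_nb_walks] by (simp add: indicator_def of_bool_def)
    finally show ?thesis .
  qed
  have "measure_pmf.expectation (chung_lu n d) (\<lambda>G. real (NBP n G r s t))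
      = (\<Sum>c\<in>?C. measure_pmf.prob (chung_lu n d) (?present c))"
    unfolding NBP_eq
    by (subst Bochner_Integration.integral_sum) (auto simp: integrable_indicator_iff less_top[symmetric])
  also have "\<dots> = (\<Sum>c\<in>?C. \<Prod>e\<in>walk_edges s c. p e)"
    using s by (intro sum.cong refl prob_all_edges_present walk_edges_subset_CL_edges)
      (auto simp: nb_walk_iff)
  also have "\<dots> = walk_weight {} None s r"
    by (simp add: walk_weight_eq_sum)
  finally show ?thesis .
qed

end

locale chung_lu_budget = chung_lu_target +
  fixes R :: nat
  assumes budget: "real R * CL_S n d < CL_S2 n d"
begin

abbreviation "pmax \<equiv> CL_pmax n d"

definition "a = real R * q"
definition "beta = 2 * pmax * q * a / (1 - a)"
definition "growth m = (1 + beta) ^ m * (1 + real m * beta)"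
definition "a_series m = (\<Sum>j\<in>{1..<m}. a ^ j)"
definition "eta m = 2 * a_series m * (1 + beta) ^ m"
definition "revisit m = eta m * mu ^ m * q * dmax / S"

lemma a_nonneg: "a \<ge> 0"
  using q_pos by (simp add: a_def)

lemma a_less_one: "a < 1"
  using budget S2_pos by (simp add: a_def q_def field_simps)

lemma beta_nonneg: "beta \<ge> 0"
  using q_pos a_nonneg a_less_one S_pos by (simp add: beta_def CL_pmax_def)

lemma growth_nonneg: "growth m \<ge> 0"
  using beta_nonneg by (simp add: growth_def)

lemma growth_mono: "i \<le> m \<Longrightarrow> growth i \<le> growth m"
  unfolding growth_def using beta_nonneg
  by (intro mult_mono power_increasing) (auto intro!: mult_right_mono)

lemma a_series_Suc: "a_series (Suc m) = a_series m + (if m \<ge> 1 then a ^ m else 0)"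
proof (cases "m \<ge> 1")
  case True
  then have "{1..<Suc m} = insert m {1..<m}" by auto
  then show ?thesis using True by (simp add: a_series_def)
qed (simp add: a_series_def)

lemma a_series_nonneg: "a_series m \<ge> 0"
  unfolding a_series_def using a_nonneg by (intro sum_nonneg) auto

lemma a_series_mono: "i \<le> m \<Longrightarrow> a_series i \<le> a_series m"
  unfolding a_series_def using a_nonneg by (intro sum_mono2) auto

lemma a_series_le: "a_series m \<le> a / (1 - a)"
proof -
  have "a_series m * (1 - a) = (if m \<ge> 1 then a - a ^ m else 0)"
  proof (induction m)
    case (Suc m)
    show ?case
    proof (cases "m \<ge> 1")
      case True
      have "(a_series m + a ^ m) * (1 - a) = a_series m * (1 - a) + a ^ m - a ^ Suc m"
        by (simp add: algebra_simps)
      then show ?thesis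
        using Suc True by (simp add: a_series_Suc)
    next
      case False
      then have "m = 0" by simp
      then show ?thesis by (simp add: a_series_def)
    qed
  qed (simp add: a_series_def)
  then have "a_series m * (1 - a) \<le> a"
    using a_nonneg by auto
  then show ?thesis
    using a_less_one by (simp add: field_simps)
qed

lemma eta_nonneg: "eta m \<ge> 0"
  using a_series_nonneg beta_nonneg by (simp add: eta_def)

lemma eta_mono: "i \<le> m \<Longrightarrow> eta i \<le> eta m"
  unfolding eta_def using beta_nonneg a_series_nonneg a_series_mono
  by (intro mult_mono power_increasing) auto

lemma revisit_nonneg: "revisit m \<ge> 0"
  using eta_nonneg mu_pos q_pos dmax_pos S_pos by (simp add: revisit_def)

lemma revisit_0: "revisit 0 = 0"
  by (simp add: revisit_def eta_def a_series_def)

lemma eta_step: "eta m * (1 + beta) + 2 * (if m \<ge> 1 then a ^ m else 0) \<le> eta (Suc m)"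
proof -
  let ?new = "if m \<ge> 1 then a ^ m else 0"
  have "?new * 1 \<le> ?new * (1 + beta) ^ Suc m"
    using a_nonneg beta_nonneg by (intro mult_left_mono one_le_power) auto
  moreover have "eta (Suc m) = eta m * (1 + beta) + 2 * ?new * (1 + beta) ^ Suc m"
    by (simp add: eta_def a_series_Suc algebra_simps)
  ultimately show ?thesis by simp
qed

lemma growth_step: "growth m * (1 + beta) + pmax * q * eta m \<le> growth (Suc m)"
proof -
  have "pmax * q * eta m \<le> pmax * q * (2 * (a / (1 - a)) * (1 + beta) ^ m)"
    unfolding eta_def using a_series_le beta_nonneg q_pos S_pos
    by (intro mult_left_mono mult_right_mono) (auto simp: CL_pmax_def)
  also have "\<dots> = beta * (1 + beta) ^ m"
    by (simp add: beta_def)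
  also have "\<dots> \<le> beta * (1 + beta) ^ Suc m"
    using beta_nonneg by (intro mult_left_mono power_increasing) auto
  finally show ?thesis
    by (simp add: growth_def algebra_simps)
qed

text \<open>For \<open>m \<ge> 1\<close>, \<open>tree_weight m x = p {x, t} * mu ^ (m - 1)\<close>: the expected number of walks
  of length \<open>m\<close> from \<open>x\<close> to \<open>t\<close> if no edge were ever reused.
  \<open>new_bound b x m\<close> bounds the continuations whose first step uses a new edge, \<open>old_bound b m\<close>
  (per used neighbour) those whose first step is free; \<open>b\<close> records whether \<open>t\<close> lies on a used
  edge.\<close>

definition "tree_weight m x = (if m = 0 then (if x = t then 1 else 0) else d x * d t * mu ^ m * q / S)"

definition "new_bound b x m = tree_weight m x * growth m + (if b then d x * revisit m else 0)"

definition "old_step_bound b m = (if m = 0 then (if b then 1 else 0)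
   else dmax * d t * mu ^ m * q * growth m / S + (if b then dmax * revisit m else 0))"

text \<open>The \<open>l\<close>-th term accounts for \<open>l\<close> consecutive free steps, each with at most \<open>R\<close> choices.\<close>

definition "old_bound b m = (\<Sum>l\<in>{1..m}. real R ^ (l - 1) * old_step_bound b (m - l))"

lemma old_step_bound_nonneg: "old_step_bound b m \<ge> 0"
  using revisit_nonneg growth_nonneg mu_pos q_pos dmax_pos S_pos d_t_pos
  by (simp add: old_step_bound_def)

lemma old_bound_nonneg: "old_bound b m \<ge> 0"
  unfolding old_bound_def using old_step_bound_nonneg by (intro sum_nonneg) auto

lemma old_bound_0: "old_bound b 0 = 0"
  by (simp add: old_bound_def)

lemma old_bound_Suc: "old_bound b (Suc m) = old_step_bound b m + real R * old_bound b m"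
proof -
  have "{1..Suc m} = insert 1 (Suc ` {1..m})" by (auto simp: image_iff)
  then have "old_bound b (Suc m) = old_step_bound b m
      + (\<Sum>l\<in>Suc ` {1..m}. real R ^ (l - 1) * old_step_bound b (Suc m - l))"
    by (simp add: old_bound_def)
  also have "(\<Sum>l\<in>Suc ` {1..m}. real R ^ (l - 1) * old_step_bound b (Suc m - l))
      = (\<Sum>l\<in>{1..m}. real R ^ l * old_step_bound b (m - l))"
    by (subst sum.reindex) auto
  also have "\<dots> = real R * old_bound b m"
    unfolding old_bound_def sum_distrib_left by (intro sum.cong refl) (auto simp: power_eq_if)
  finally show ?thesis .
qed

lemma new_bound_le_old_step_bound:
  assumes "z \<in> {1..n}" "z = t \<longrightarrow> b"
  shows "new_bound b z m \<le> old_step_bound b m"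
proof (cases "m = 0")
  case True
  then show ?thesis
    using assms(2) by (auto simp: new_bound_def old_step_bound_def tree_weight_def revisit_0 growth_def)
next
  case False
  have dz: "d z \<le> dmax" "d z > 0"
    using d_le_dmax d_pos assms(1) by auto
  have "d z * (d t * mu ^ m * q * growth m) \<le> dmax * (d t * mu ^ m * q * growth m)"
    using dz d_t_pos mu_pos q_pos growth_nonneg by (intro mult_right_mono) auto
  then have "d z * d t * mu ^ m * q / S * growth m \<le> dmax * d t * mu ^ m * q * growth m / S"
    using S_pos by (simp add: divide_right_mono mult.assoc)
  moreover have "(if b then d z * revisit m else 0) \<le> (if b then dmax * revisit m else 0)"
    using dz revisit_nonneg by (auto intro: mult_right_mono)
  ultimately show ?thesis
    using False by (simp add: new_bound_def old_step_bound_def tree_weight_def)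
qed

lemma sum_a_power_pred_le: "(\<Sum>l\<in>{1..m}. a ^ (l - 1)) \<le> 1 / (1 - a)"
proof -
  have "(\<Sum>l\<in>{1..m}. a ^ (l - 1)) = (\<Sum>k<m. a ^ k)"
    by (simp add: sum.atLeast1_atMost_eq)
  also have "\<dots> \<le> 1 / (1 - a)"
    using a_nonneg a_less_one by (rule sum_power_lessThan_le)
  finally show ?thesis .
qed

lemma old_bound_le:
  "old_bound b m \<le> (dmax * d t * mu ^ m * growth m / S + (if b then dmax^2 * eta m * mu ^ m / S else 0))
       * (q^2 / (1 - a))
     + (if b \<and> m \<ge> 1 then real R ^ (m - 1) else 0)"
proof -
  define C where "C = dmax * d t * mu ^ m * growth m / S + (if b then dmax^2 * eta m * mu ^ m / S else 0)"
  have C_nonneg: "C \<ge> 0"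
    unfolding C_def using growth_nonneg eta_nonneg mu_pos dmax_pos S_pos d_t_pos by simp
  have term_le: "real R ^ (l - 1) * old_step_bound b (m - l)
      \<le> C * (q^2 * a ^ (l - 1)) + (if l = m then (if b then real R ^ (m - 1) else 0) else 0)"
    if l: "l \<in> {1..m}" for l
  proof (cases "l = m")
    case True
    then show ?thesis
      using C_nonneg q_pos a_nonneg by (simp add: old_step_bound_def)
  next
    case False
    then have lm: "l < m" using l by auto
    have ql: "q ^ l = q * q ^ (l - 1)"
      using l by (cases l) auto
    have "old_step_bound b (m - l) = (q^2 * q ^ (l - 1)) * (dmax * d t * mu ^ m * growth (m - l) / S
          + (if b then dmax^2 * eta (m - l) * mu ^ m / S else 0))"
      using lm mu_power_diff[of l m]
      by (simp add: old_step_bound_def revisit_def ql algebra_simps power2_eq_square)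
    also have "\<dots> \<le> (q^2 * q ^ (l - 1)) * C"
      unfolding C_def using growth_mono[of "m - l" m] eta_mono[of "m - l" m]
        dmax_pos d_t_pos mu_pos S_pos q_pos
      by (intro mult_left_mono add_mono) (auto intro!: divide_right_mono mult_left_mono)
    finally have "real R ^ (l - 1) * old_step_bound b (m - l)
        \<le> real R ^ (l - 1) * ((q^2 * q ^ (l - 1)) * C)"
      by (intro mult_left_mono) auto
    also have "\<dots> = C * (q^2 * a ^ (l - 1))"
      by (simp add: a_def power_mult_distrib)
    finally show ?thesis
      using False by simp
  qed
  have "old_bound b m \<le> (\<Sum>l\<in>{1..m}. C * (q^2 * a ^ (l - 1))
      + (if l = m then (if b then real R ^ (m - 1) else 0) else 0))"
    unfolding old_bound_def by (intro sum_mono term_le)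
  also have "\<dots> = C * q^2 * (\<Sum>l\<in>{1..m}. a ^ (l - 1)) + (if b \<and> m \<ge> 1 then real R ^ (m - 1) else 0)"
    by (simp add: sum.distrib sum_distrib_left mult.assoc)
  also have "\<dots> \<le> C * q^2 * (1 / (1 - a)) + (if b \<and> m \<ge> 1 then real R ^ (m - 1) else 0)"
    using C_nonneg sum_a_power_pred_le by (intro add_mono mult_left_mono) auto
  finally show ?thesis
    by (simp add: C_def)
qed

lemma scaled_old_bound_le:
  assumes x: "x \<in> {1..n}"
  shows "(d x * dmax / S) * (2 * real R) * old_bound b m
    \<le> d x * d t * mu ^ m / S * growth m * beta
      + (if b then d x * (dmax * mu ^ m / S) * (eta m * beta + 2 * (if m \<ge> 1 then a ^ m else 0)) else 0)"
proof -
  define P where "P = d x * d t * mu ^ m / S"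
  define Q where "Q = d x * (dmax * mu ^ m / S)"
  have a1: "1 - a > 0" using a_less_one by simp
  have old_growth: "(d x * dmax / S) * (2 * real R) * ((dmax * d t * mu ^ m * growth m / S) * (q^2 / (1 - a)))
      = P * growth m * beta"
    using S_pos a1 by (simp add: P_def beta_def CL_pmax_def a_def field_simps power2_eq_square)
  have old_eta: "(d x * dmax / S) * (2 * real R) * ((dmax^2 * eta m * mu ^ m / S) * (q^2 / (1 - a)))
      = Q * (eta m * beta)"
    using S_pos a1 by (simp add: Q_def beta_def CL_pmax_def a_def field_simps power2_eq_square)
  have old_tail: "(d x * dmax / S) * (2 * real R) * (if m \<ge> 1 then real R ^ (m - 1) else 0)
      = Q * (2 * (if m \<ge> 1 then a ^ m else 0))"
  proof (cases "m \<ge> 1")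
    case True
    have "real R * real R ^ (m - 1) = real R ^ m"
      using True by (cases m) auto
    moreover have "a * mu = real R"
      using mu_mult_q by (simp add: a_def algebra_simps)
    then have "a ^ m * mu ^ m = real R ^ m"
      by (simp flip: power_mult_distrib)
    ultimately show ?thesis
      using True by (simp add: Q_def algebra_simps)
  qed simp
  have "(d x * dmax / S) * (2 * real R) * old_bound b m \<le> (d x * dmax / S) * (2 * real R) *
     ((dmax * d t * mu ^ m * growth m / S + (if b then dmax^2 * eta m * mu ^ m / S else 0)) * (q^2 / (1 - a))
     + (if b \<and> m \<ge> 1 then real R ^ (m - 1) else 0))"
    using d_pos[OF x] dmax_pos S_pos by (intro mult_left_mono old_bound_le) auto
  then show ?thesis
    unfolding P_def[symmetric] Q_def[symmetric]
    using old_growth old_eta old_tail by (cases b) (simp_all add: algebra_simps)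
qed

text \<open>The left-hand side is what one step along a new edge \<open>{x, y}\<close>, followed by the induction
  hypothesis at \<open>y\<close>, contributes after summing over \<open>y\<close>; see \<open>new_edges_le\<close>.\<close>

lemma new_bound_step:
  assumes x: "x \<in> {1..n}"
  shows "tree_weight (Suc m) x * growth m
       + (if b then d x * mu * revisit m else d x * (d t)^2 * revisit m / S)
       + (d x * dmax / S) * (2 * real R) * old_bound b m
     \<le> new_bound b x (Suc m)"
proof -
  define P where "P = d x * d t * mu ^ m / S"
  define Q where "Q = d x * (dmax * mu ^ m / S)"
  have P_nonneg: "P \<ge> 0" and Q_nonneg: "Q \<ge> 0"
    using d_pos[OF x] d_t_pos mu_pos S_pos dmax_pos by (auto simp: P_def Q_def)
  have tree: "tree_weight (Suc m) x = P"
    using mu_mult_q by (simp add: tree_weight_def P_def algebra_simps)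
  have new_bound_Suc: "new_bound b x (Suc m) = P * growth (Suc m) + (if b then Q * eta (Suc m) else 0)"
    using tree mu_mult_q by (simp add: new_bound_def revisit_def Q_def algebra_simps)
  have old: "(d x * dmax / S) * (2 * real R) * old_bound b m
      \<le> P * growth m * beta + (if b then Q * (eta m * beta + 2 * (if m \<ge> 1 then a ^ m else 0)) else 0)"
    unfolding P_def Q_def by (rule scaled_old_bound_le[OF x])
  have growth_Suc: "P * (growth m * (1 + beta) + pmax * q * eta m) \<le> P * growth (Suc m)"
    using growth_step P_nonneg by (intro mult_left_mono)
  show ?thesis
  proof (cases b)
    case True
    have "d x * mu * revisit m = Q * eta m"
      using mu_mult_q by (simp add: revisit_def Q_def algebra_simps)
    moreover have "Q * (eta m * (1 + beta) + 2 * (if m \<ge> 1 then a ^ m else 0)) \<le> Q * eta (Suc m)"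
      using eta_step Q_nonneg by (intro mult_left_mono)
    moreover have "P * (pmax * q * eta m) \<ge> 0"
      using P_nonneg S_pos q_pos eta_nonneg[of m] by (simp add: CL_pmax_def)
    ultimately show ?thesis
      using True tree old growth_Suc new_bound_Suc by (simp add: algebra_simps)
  next
    case False
    have "d x * (d t)^2 * revisit m / S = P * (d t * dmax / S) * q * eta m"
      by (simp add: P_def revisit_def power2_eq_square field_simps)
    also have "\<dots> \<le> P * (dmax * dmax / S) * q * eta m"
      using d_le_dmax[OF t] dmax_pos S_pos P_nonneg q_pos eta_nonneg[of m] d_t_pos
      by (intro mult_right_mono mult_left_mono divide_right_mono) auto
    finally have "d x * (d t)^2 * revisit m / S \<le> P * (pmax * q * eta m)"
      by (simp add: CL_pmax_def power2_eq_square algebra_simps)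
    then show ?thesis
      using False tree old growth_Suc new_bound_Suc by (simp add: algebra_simps)
  qed
qed

lemma sum_edge_prob_tree_weight: "(\<Sum>y\<in>{1..n}. p {x, y} * tree_weight m y) = tree_weight (Suc m) x"
proof (cases "m = 0")
  case True
  have "(\<Sum>y\<in>{1..n}. p {x, y} * tree_weight m y) = (\<Sum>y\<in>{1..n}. if y = t then p {x, t} else 0)"
    using True by (intro sum.cong) (auto simp: tree_weight_def)
  also have "\<dots> = p {x, t}"
    using t by simp
  finally show ?thesis
    using True mu_mult_q by (simp add: tree_weight_def edge_prob_doubleton)
next
  case False
  have "(\<Sum>y\<in>{1..n}. p {x, y} * tree_weight m y)
      = (d x * d t * mu ^ m * q / S / S) * (\<Sum>y\<in>{1..n}. d y * d y)"
    using False
    by (simp add: tree_weight_def edge_prob_doubleton sum_distrib_left sum_divide_distrib algebra_simps)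
  also have "(\<Sum>y\<in>{1..n}. d y * d y) = S2"
    by (simp add: CL_S2_def power2_eq_square)
  finally show ?thesis
    using S_pos by (simp add: tree_weight_def mu_def field_simps)
qed

lemma sum_edge_prob_new_bound:
  "(\<Sum>y\<in>{1..n}. p {x, y} * new_bound (b \<or> y = t) y m)
   = tree_weight (Suc m) x * growth m
     + (if b then d x * mu * revisit m else d x * (d t)^2 * revisit m / S)"
proof -
  have "(\<Sum>y\<in>{1..n}. p {x, y} * new_bound (b \<or> y = t) y m)
      = growth m * (\<Sum>y\<in>{1..n}. p {x, y} * tree_weight m y)
        + (\<Sum>y\<in>{1..n}. p {x, y} * (if b \<or> y = t then d y * revisit m else 0))"
    by (simp add: new_bound_def sum.distrib sum_distrib_left algebra_simps)
  also have "(\<Sum>y\<in>{1..n}. p {x, y} * (if b \<or> y = t then d y * revisit m else 0))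
      = (if b then d x * mu * revisit m else d x * (d t)^2 * revisit m / S)"
  proof (cases b)
    case True
    then have "(\<Sum>y\<in>{1..n}. p {x, y} * (if b \<or> y = t then d y * revisit m else 0))
        = revisit m * (\<Sum>y\<in>{1..n}. p {x, y} * d y)"
      by (simp add: sum_distrib_left algebra_simps)
    then show ?thesis
      using True sum_edge_prob_mult_d[of x] by simp
  next
    case False
    then have "(\<Sum>y\<in>{1..n}. p {x, y} * (if b \<or> y = t then d y * revisit m else 0))
        = (\<Sum>y\<in>{1..n}. if y = t then p {x, t} * d t * revisit m else 0)"
      by (intro sum.cong) auto
    also have "\<dots> = p {x, t} * d t * revisit m"
      using t by simp
    finally show ?thesis
      using False by (simp add: edge_prob_doubleton power2_eq_square)
  qed
  finally show ?thesis
    using sum_edge_prob_tree_weight[of x m] by simp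
qed

definition "touches_t E x \<longleftrightarrow> x = t \<or> t \<in> \<Union>E"

definition "old_degree E pr x = card {z\<in>{1..n}. pr \<noteq> Some z \<and> {x, z} \<in> E}"

definition "walk_bound E pr x k =
  new_bound (touches_t E x) x k + real (old_degree E pr x) * old_bound (touches_t E x) k"

definition "admissible E k \<longleftrightarrow> finite E \<and> card E + k \<le> R \<and> (\<forall>e\<in>E. \<exists>u v. e = {u, v})"

lemma old_degree_le_card: "finite E \<Longrightarrow> old_degree E pr x \<le> card E"
  using card_doubleton_neighbours_le[of E "\<lambda>z. z \<in> {1..n} \<and> pr \<noteq> Some z" x]
  by (simp add: old_degree_def conj_assoc)

lemma walk_weight_Suc_split:
  "walk_weight E pr x (Suc m) =
     (\<Sum>y\<in>{y\<in>{1..n}. pr \<noteq> Some y \<and> {x, y} \<notin> E}. p {x, y} * walk_weight (insert {x, y} E) (Some x) y m)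
   + (\<Sum>y\<in>{y\<in>{1..n}. pr \<noteq> Some y \<and> {x, y} \<in> E}. walk_weight E (Some x) y m)"
proof -
  let ?Y = "{y\<in>{1..n}. pr \<noteq> Some y}"
  have "walk_weight E pr x (Suc m) = (\<Sum>y\<in>?Y. if {x, y} \<in> E then walk_weight E (Some x) y m
      else p {x, y} * walk_weight (insert {x, y} E) (Some x) y m)"
    by (auto intro!: sum.cong simp: insert_absorb)
  also have "\<dots> = (\<Sum>y\<in>?Y \<inter> {y. {x, y} \<in> E}. walk_weight E (Some x) y m)
      + (\<Sum>y\<in>?Y \<inter> - {y. {x, y} \<in> E}. p {x, y} * walk_weight (insert {x, y} E) (Some x) y m)"
    by (rule sum.If_cases) simp
  also have "?Y \<inter> {y. {x, y} \<in> E} = {y\<in>{1..n}. pr \<noteq> Some y \<and> {x, y} \<in> E}"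
    by auto
  also have "?Y \<inter> - {y. {x, y} \<in> E} = {y\<in>{1..n}. pr \<noteq> Some y \<and> {x, y} \<notin> E}"
    by auto
  finally show ?thesis
    by simp
qed

lemma old_edges_le:
  assumes IH: "\<And>E pr z. admissible E m \<Longrightarrow> z \<in> {1..n} \<Longrightarrow> walk_weight E pr z m \<le> walk_bound E pr z m"
    and adm: "admissible E (Suc m)"
  shows "(\<Sum>z\<in>{z\<in>{1..n}. pr \<noteq> Some z \<and> {x, z} \<in> E}. walk_weight E (Some x) z m)
      \<le> real (old_degree E pr x) * old_bound (touches_t E x) (Suc m)"
proof -
  let ?b = "touches_t E x"
  have each: "walk_weight E (Some x) z m \<le> old_bound ?b (Suc m)"
    if z: "z \<in> {1..n}" "{x, z} \<in> E" for z
  proof -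
    have b: "touches_t E z = ?b"
      using z by (auto simp: touches_t_def)
    have "old_degree E (Some x) z \<le> R"
      using old_degree_le_card[of E "Some x" z] adm by (simp add: admissible_def)
    then have "real (old_degree E (Some x) z) * old_bound ?b m \<le> real R * old_bound ?b m"
      using old_bound_nonneg by (intro mult_right_mono) auto
    moreover have "new_bound ?b z m \<le> old_step_bound ?b m"
      using z b by (intro new_bound_le_old_step_bound) (auto simp: touches_t_def)
    moreover have "walk_weight E (Some x) z m \<le> walk_bound E (Some x) z m"
      using adm z by (intro IH) (auto simp: admissible_def)
    ultimately show ?thesis
      using b by (simp add: walk_bound_def old_bound_Suc)
  qed
  have "(\<Sum>z\<in>{z\<in>{1..n}. pr \<noteq> Some z \<and> {x, z} \<in> E}. walk_weight E (Some x) z m)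
      \<le> (\<Sum>z\<in>{z\<in>{1..n}. pr \<noteq> Some z \<and> {x, z} \<in> E}. old_bound ?b (Suc m))"
    using each by (intro sum_mono) auto
  also have "\<dots> = real (old_degree E pr x) * old_bound ?b (Suc m)"
    by (simp add: old_degree_def)
  finally show ?thesis .
qed

lemma new_edge_le:
  assumes IH: "\<And>E pr z. admissible E m \<Longrightarrow> z \<in> {1..n} \<Longrightarrow> walk_weight E pr z m \<le> walk_bound E pr z m"
    and adm: "admissible E (Suc m)" and x: "x \<in> {1..n}" and y: "y \<in> {1..n}" "{x, y} \<notin> E"
  shows "p {x, y} * walk_weight (insert {x, y} E) (Some x) y m
      \<le> p {x, y} * new_bound (touches_t E x \<or> y = t) y m
        + (d x * dmax / S) * (real (card {z\<in>{1..n}. {y, z} \<in> E}) * old_bound (touches_t E x) m)"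
proof -
  let ?b = "touches_t E x" and ?E = "insert {x, y} E"
  let ?deg = "card {z\<in>{1..n}. {y, z} \<in> E}"
  have b: "touches_t ?E y \<longleftrightarrow> ?b \<or> y = t"
    by (auto simp: touches_t_def)
  have deg: "old_degree ?E (Some x) y \<le> ?deg"
    unfolding old_degree_def by (rule card_mono) (auto simp: doubleton_eq_iff)
  have old: "real (old_degree ?E (Some x) y) * old_bound (touches_t ?E y) m
      \<le> real ?deg * old_bound ?b m"
  proof (cases "?deg = 0")
    case True
    then have "old_degree ?E (Some x) y = 0"
      using deg by linarith
    then show ?thesis
      using old_bound_nonneg by simp
  next
    case False
    then obtain z where "{y, z} \<in> E"
      by (metis (no_types, lifting) Collect_empty_eq card.empty)
    then have "touches_t ?E y = ?b"
      by (auto simp: touches_t_def)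
    then show ?thesis
      using deg old_bound_nonneg by (auto intro: mult_right_mono)
  qed
  have "admissible ?E m"
    using adm y(2) by (auto simp: admissible_def)
  then have "walk_weight ?E (Some x) y m \<le> new_bound (?b \<or> y = t) y m + real ?deg * old_bound ?b m"
    using IH[of ?E y "Some x"] y old b by (simp add: walk_bound_def)
  then have "p {x, y} * walk_weight ?E (Some x) y m
      \<le> p {x, y} * new_bound (?b \<or> y = t) y m + p {x, y} * (real ?deg * old_bound ?b m)"
    using edge_prob_nonneg[OF x y(1)] by (simp add: mult_left_mono flip: distrib_left)
  also have "p {x, y} * (real ?deg * old_bound ?b m) \<le> (d x * dmax / S) * (real ?deg * old_bound ?b m)"
    using edge_prob_le[OF x y(1)] old_bound_nonneg by (intro mult_right_mono) auto
  finally show ?thesis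
    by simp
qed

lemma new_edges_le:
  assumes IH: "\<And>E pr z. admissible E m \<Longrightarrow> z \<in> {1..n} \<Longrightarrow> walk_weight E pr z m \<le> walk_bound E pr z m"
    and adm: "admissible E (Suc m)" and x: "x \<in> {1..n}"
  shows "(\<Sum>y\<in>{y\<in>{1..n}. pr \<noteq> Some y \<and> {x, y} \<notin> E}. p {x, y} * walk_weight (insert {x, y} E) (Some x) y m)
      \<le> new_bound (touches_t E x) x (Suc m)"
proof -
  let ?b = "touches_t E x"
  let ?deg = "\<lambda>y. card {z\<in>{1..n}. {y, z} \<in> E}"
  define f where "f y = p {x, y} * new_bound (?b \<or> y = t) y m
      + (d x * dmax / S) * (real (?deg y) * old_bound ?b m)" for y
  have f_nonneg: "f y \<ge> 0" if "y \<in> {1..n}" for y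
    unfolding f_def new_bound_def tree_weight_def
    using that x d_pos[of y] d_pos[of x] d_t_pos mu_pos q_pos S_pos dmax_pos edge_prob_nonneg[OF x that]
      growth_nonneg[of m] revisit_nonneg[of m] old_bound_nonneg[of ?b m]
    by (intro add_nonneg_nonneg mult_nonneg_nonneg) auto
  have "(\<Sum>y\<in>{1..n}. real (?deg y)) \<le> 2 * real R"
  proof -
    have "(\<Sum>y\<in>{1..n}. ?deg y) \<le> 2 * card E"
      using adm by (intro sum_card_doubleton_neighbours_le) (auto simp: admissible_def)
    also have "\<dots> \<le> 2 * R"
      using adm by (simp add: admissible_def)
    finally show ?thesis
      by (simp flip: of_nat_sum)
  qed
  then have old: "(d x * dmax / S) * old_bound ?b m * (\<Sum>y\<in>{1..n}. real (?deg y))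
      \<le> (d x * dmax / S) * old_bound ?b m * (2 * real R)"
    using d_pos[OF x] dmax_pos S_pos old_bound_nonneg[of ?b m] by (intro mult_left_mono) auto
  have "(\<Sum>y\<in>{y\<in>{1..n}. pr \<noteq> Some y \<and> {x, y} \<notin> E}. p {x, y} * walk_weight (insert {x, y} E) (Some x) y m)
      \<le> (\<Sum>y\<in>{y\<in>{1..n}. pr \<noteq> Some y \<and> {x, y} \<notin> E}. f y)"
    unfolding f_def using IH adm x by (intro sum_mono new_edge_le) auto
  also have "\<dots> \<le> (\<Sum>y\<in>{1..n}. f y)"
    using f_nonneg by (intro sum_mono2) auto
  also have "\<dots> = (\<Sum>y\<in>{1..n}. p {x, y} * new_bound (?b \<or> y = t) y m)
      + (d x * dmax / S) * old_bound ?b m * (\<Sum>y\<in>{1..n}. real (?deg y))"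
    by (simp add: f_def sum.distrib sum_distrib_left sum_distrib_right algebra_simps)
  also have "\<dots> \<le> tree_weight (Suc m) x * growth m
      + (if ?b then d x * mu * revisit m else d x * (d t)^2 * revisit m / S)
      + (d x * dmax / S) * (2 * real R) * old_bound ?b m"
    using old sum_edge_prob_new_bound[of x ?b m] by (simp add: ac_simps)
  also have "\<dots> \<le> new_bound ?b x (Suc m)"
    by (rule new_bound_step[OF x])
  finally show ?thesis .
qed

lemma walk_weight_le:
  "admissible E k \<Longrightarrow> x \<in> {1..n} \<Longrightarrow> walk_weight E pr x k \<le> walk_bound E pr x k"
proof (induction k arbitrary: E pr x)
  case 0
  show ?case
    by (simp add: walk_bound_def new_bound_def tree_weight_def growth_def revisit_0 old_bound_0)
next
  case (Suc m)
  have "walk_weight E pr x (Suc m)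
      \<le> new_bound (touches_t E x) x (Suc m) + real (old_degree E pr x) * old_bound (touches_t E x) (Suc m)"
    unfolding walk_weight_Suc_split
    using new_edges_le[OF Suc.IH Suc.prems] old_edges_le[OF Suc.IH Suc.prems(1)] by (intro add_mono)
  then show ?case
    by (simp add: walk_bound_def)
qed

lemma expectation_NBP_le_growth:
  assumes s: "s \<in> {1..n}" "s \<noteq> t" and R: "R \<ge> 1"
  shows "measure_pmf.expectation (chung_lu n d) (\<lambda>G. real (NBP n G R s t))
    \<le> CL_p n d s t * mu ^ (R - 1) * growth R"
proof -
  have "admissible {} R"
    by (simp add: admissible_def)
  then have "walk_weight {} None s R \<le> walk_bound {} None s R"
    using s(1) by (rule walk_weight_le)
  also have "walk_bound {} None s R = tree_weight R s * growth R"
    using s by (simp add: walk_bound_def touches_t_def old_degree_def new_bound_def)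
  also have "tree_weight R s = CL_p n d s t * mu ^ (R - 1)"
  proof -
    have "mu ^ R * q = mu ^ (R - 1) * (mu * q)"
      using R by (cases R) auto
    then show ?thesis
      using R mu_mult_q by (simp add: tree_weight_def CL_p_def)
  qed
  finally show ?thesis
    using expectation_NBP[OF s(1)] by simp
qed

lemma growth_le_exp: "growth m \<le> exp (2 * real m * beta)"
  unfolding growth_def using beta_nonneg by (rule power_mult_le_exp)

lemma two_R_beta_le:
  assumes "2 * real R * q < 1"
  shows "2 * real R * beta \<le> (2 * real R * q)^2 * pmax / (1 - 2 * real R * q)"
proof -
  have "2 * real R * beta = (2 * real R * q)^2 * pmax / (1 - real R * q)"
    by (simp add: beta_def a_def power2_eq_square field_simps)
  also have "\<dots> \<le> (2 * real R * q)^2 * pmax / (1 - 2 * real R * q)"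
    using assms q_pos S_pos by (intro divide_left_mono mult_nonneg_nonneg) (auto simp: CL_pmax_def)
  finally show ?thesis .
qed

lemma expectation_NBP_le:
  assumes s: "s \<in> {1..n}" "s \<noteq> t" and R: "R \<ge> 1" and small: "2 * real R * q < 1"
  shows "measure_pmf.expectation (chung_lu n d) (\<lambda>G. real (NBP n G R s t))
    \<le> CL_p n d s t * mu ^ (R - 1) / (1 - q)
       * exp ((2 * real R * q)^2 * pmax / (1 - 2 * real R * q))"
proof -
  let ?X = "(2 * real R * q)^2 * pmax / (1 - 2 * real R * q)"
  have p_mu: "CL_p n d s t * mu ^ (R - 1) \<ge> 0"
    using s t d_pos[of s] d_t_pos S_pos mu_pos by (simp add: CL_p_def)
  have "growth R \<le> exp ?X"
    using growth_le_exp[of R] two_R_beta_le[OF small] by (meson exp_le_cancel_iff order_trans)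
  then have "CL_p n d s t * mu ^ (R - 1) * growth R \<le> CL_p n d s t * mu ^ (R - 1) * exp ?X"
    using p_mu by (intro mult_left_mono)
  also have "\<dots> \<le> CL_p n d s t * mu ^ (R - 1) / (1 - q) * exp ?X"
  proof -
    have "q \<le> real R * q"
      using R q_pos mult_right_mono[of 1 "real R" q] by simp
    then have "0 < 1 - q"
      using small q_pos by linarith
    moreover have "CL_p n d s t * mu ^ (R - 1) * (1 - q) \<le> CL_p n d s t * mu ^ (R - 1)"
      using p_mu q_pos by (intro mult_left_le) auto
    ultimately show ?thesis
      by (intro mult_right_mono) (auto simp: le_divide_eq)
  qed
  finally show ?thesis
    using expectation_NBP_le_growth[OF s R] by linarith
qed

end

theorem theorem3:
  fixes n :: nat and d :: "nat \<Rightarrow> real" and s t r :: nat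
  assumes dpos: "\<forall>i\<in>{1..n}. d i > 0"
    and dmax: "\<forall>i\<in>{1..n}. (d i)^2 \<le> CL_S n d"
    and S2gt: "CL_S2 n d > CL_S n d"
    and s: "s \<in> {1..n}" and t: "t \<in> {1..n}" and st: "s \<noteq> t"
    and r: "r \<ge> 1" and r2: "2 * real r < CL_S2 n d / CL_S n d"
  shows "measure_pmf.expectation (chung_lu n d) (\<lambda>G. real (NBP n G r s t))
     \<le> CL_p n d s t * (CL_S2 n d / CL_S n d) ^ (r - 1) / (1 - CL_S n d / CL_S2 n d)
        * exp ((2 * real r * (CL_S n d / CL_S2 n d))^2 * CL_pmax n d
               / (1 - 2 * real r * CL_S n d / CL_S2 n d))"
proof -
  \<comment> \<open>\<open>S2gt\<close> is implied by \<open>r2\<close> and \<open>r \<ge> 1\<close>.\<close>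
  interpret chung_lu_target n d t
    using dpos dmax t by unfold_locales auto
  have small: "2 * real r * CL_S n d < CL_S2 n d"
    using r2 S_pos by (simp add: field_simps)
  interpret chung_lu_budget n d t r
    using small mult_nonneg_nonneg[of "real r" S] S_pos by unfold_locales linarith
  have "2 * real r * q < 1"
    using small S2_pos by (simp add: q_def field_simps)
  from expectation_NBP_le[OF s st r this] show ?thesis
    by (simp add: mu_def q_def)
qed

end
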